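(* Suppose $f$ is $L_f$-smooth, $\mathbf{c}$ is $L_c$-smooth, and there exist $C,G>0$ such that for all $\mathbf{x}$: $\|\nabla f(\mathbf{x})\|\le G$, all subgradients of $h$ and $g$ have norm at most $G$, $\|\nabla\mathbf{c}(\mathbf{x})\|\le G$, $\|\mathbf{c}(\mathbf{x})\|\le C$. Suppose the parameters satisfy $\mu_kL_{\rho_k}\le\frac14$, $\mu_{k+1}\le\mu_k$, $\rho_k\le\rho_{k+1}$, $0<\beta\le1$ for all $k\ge0$. Then for any $k\ge0$, $\mathcal{L}_{\rho_{k+1},\mu_{k+1}}(\mathbf{w}^{k+1})\le\mathcal{L}_{\rho_k,\mu_k}(\mathbf{w}^k)-\frac{(2\mu_k)^{-1}-L_{\rho_k}}{2}\|\mathbf{w}^{k+1}-\mathbf{w}^k\|^2+\frac{\rho_{k+1}-\rho_k}{2}C^2+\Delta_{k+1}+\mu_k\|\mathbf{e}^k\|^2$, where $\Delta_{k+1}:=\frac{|\mu_k-\mu_{k+1}|}{2\mu_{k+1}^2}(C^2+\|\mathbf{x}^{k+1}-\mathbf{z}^{k+1}\|^2)$. Moreover, $\|\mathbf{w}^{k+1}-\mathbf{w}^k\|^2\le\frac{4\mu_k}{1-2\mu_kL_{\rho_k}}\bigl(\mathcal{L}_{\rho_k,\mu_k}(\mathbf{w}^k)-\mathcal{L}_{\rho_{k+1},\mu_{k+1}}(\mathbf{w}^{k+1})+\Delta_{k+1}+\frac{\rho_{k+1}-\rho_k}{2}C^2+\mu_k\|\mathbf{e}^k\|^2\bigr)$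.
   Context: Problem: $\min f(\mathbf{x})+h(\mathbf{x})-g(\mathbf{x})$ s.t. $\mathbf{c}(\mathbf{x})=\mathbf{0}$, $f=\mathbb{E}_\xi[\mathbf{f}(\cdot,\xi)]$, $h,g$ proper closed convex. $Q_\rho(\mathbf{x})=f(\mathbf{x})+\frac{\rho}{2}\|\mathbf{c}(\mathbf{x})\|^2$, which is $L_\rho$-smooth with $L_\rho=\rho(\rho_0^{-1}L_f+G^2+CL_c)$. Potential function $\mathcal{L}_{\rho,\mu}(\mathbf{w})=Q_\rho(\mathbf{x})+h(\mathbf{x})+\frac{1}{2\mu}\|\mathbf{x}-\mathbf{z}\|^2-\mathcal{M}_{\mu g}(\mathbf{z})$ for $\mathbf{w}=(\mathbf{x},\mathbf{z})$, where $\mathcal{M}_{\mu g}(\mathbf{z})=\min_{\mathbf{x}}\{g(\mathbf{x})+\frac{1}{2\mu}\|\mathbf{x}-\mathbf{z}\|^2\}$. Iterates $\mathbf{w}^k=(\mathbf{x}^k,\mathbf{z}^k)$ are generated by MoSSP-P or MoSSP-R: $\mathbf{x}^{k+1}=\mathrm{prox}_{\mu_kh}(\mathbf{z}^k-\mu_k\mathbf{G}^k)$, $\mathbf{z}^{k+1}=\mathbf{z}^k-\beta(\mathrm{prox}_{\mu_kg}(\mathbf{z}^k)-\mathbf{x}^{k+1})$, where $\mathbf{G}^k$ is the stochastic estimator $\mathbf{S}^k$ (Polyak momentum: $\mathbf{S}^k=\mathbf{s}^k+\rho_k\nabla\mathbf{c}(\mathbf{x}^k)\mathbf{c}(\mathbf{x}^k)$,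 $\mathbf{s}^k=(1-\alpha_{k-1})\mathbf{s}^{k-1}+\alpha_{k-1}\nabla\mathbf{f}(\mathbf{x}^k,\xi^k)$) or $\mathbf{D}^k$ (recursive momentum: $\mathbf{D}^k=\mathbf{d}^k+\rho_k\nabla\mathbf{c}(\mathbf{x}^k)\mathbf{c}(\mathbf{x}^k)$, $\mathbf{d}^k=\nabla\mathbf{f}(\mathbf{x}^k,\xi^k)+(1-\alpha_{k-1})(\mathbf{d}^{k-1}-\nabla\mathbf{f}(\mathbf{x}^{k-1},\xi^k))$), and $\mathbf{e}^k:=\mathbf{G}^k-\nabla Q_{\rho_k}(\mathbf{x}^k)$. *)

theory Defs
  imports "HOL-Analysis.Analysis"
begin

definition subdiff :: "('a::real_inner \<Rightarrow> real) \<Rightarrow> 'a \<Rightarrow> 'a set" where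
  "subdiff h x = {u. \<forall>y. h x + inner u (y - x) \<le> h y}"

definition prox :: "real \<Rightarrow> ('a::real_normed_vector \<Rightarrow> real) \<Rightarrow> 'a \<Rightarrow> 'a" where
  "prox mu h v = (THE x. \<forall>y. h x + (norm (x - v))\<^sup>2 / (2 * mu) \<le> h y + (norm (y - v))\<^sup>2 / (2 * mu))"

definition moreau :: "real \<Rightarrow> ('a::real_normed_vector \<Rightarrow> real) \<Rightarrow> 'a \<Rightarrow> real" where
  "moreau mu g z = (INF x. g x + (norm (x - z))\<^sup>2 / (2 * mu))"

definition Qpen :: "('a \<Rightarrow> real) \<Rightarrow> ('a \<Rightarrow> 'b::real_normed_vector) \<Rightarrow> real \<Rightarrow> 'a \<Rightarrow> real" where
  "Qpen f c rho x = f x + rho / 2 * (norm (c x))\<^sup>2"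

text \<open>Gradient of Q_rho: grad f x + rho * (grad c x) c x, where grad c x is the adjoint
  of the derivative (Jacobian) Jc x.\<close>
definition Qgrad :: "('a::real_inner \<Rightarrow> 'a) \<Rightarrow> ('a \<Rightarrow> 'b::real_inner) \<Rightarrow> ('a \<Rightarrow> 'a \<Rightarrow> 'b) \<Rightarrow> real \<Rightarrow> 'a \<Rightarrow> 'a" where
  "Qgrad fgrad c Jc rho x = fgrad x + rho *\<^sub>R adjoint (Jc x) (c x)"

definition Lrho :: "real \<Rightarrow> real \<Rightarrow> real \<Rightarrow> real \<Rightarrow> real \<Rightarrow> real \<Rightarrow> real" where
  "Lrho Lf Lc G C rho0 rho = rho * (Lf / rho0 + G\<^sup>2 + C * Lc)"

definition potential :: "('a::real_normed_vector \<Rightarrow> real) \<Rightarrow> ('a \<Rightarrow> 'b::real_normed_vector) \<Rightarrow>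
    ('a \<Rightarrow> real) \<Rightarrow> ('a \<Rightarrow> real) \<Rightarrow> real \<Rightarrow> real \<Rightarrow> 'a \<Rightarrow> 'a \<Rightarrow> real" where
  "potential f c h g rho mu x z =
     Qpen f c rho x + h x + (norm (x - z))\<^sup>2 / (2 * mu) - moreau mu g z"

end

theory Submission
  imports Defs
begin

(* The x-update is a proximal gradient step on Q_rho + h: the descent lemma for the
   L_rho-smooth Q_rho and the three-point inequality of prox_{mu h} give the decrease
   ((2 mu)^-1 - L_rho)/2 |x^{k+1} - x^k|^2, up to mu |e^k|^2 from Young's inequality.
   The z-update is a relaxed step towards prox_{mu g}(z^k); the three-point inequality of
   prox_{mu g} and 0 < beta <= 1 make the z-dependent part of the potential drop by
   |z^{k+1} - z^k|^2 / (2 mu).  Moving from (rho_k, mu_k) to (rho_{k+1}, mu_{k+1}) costs at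
   most (rho_{k+1} - rho_k) C^2 / 2 plus Delta_{k+1}, the Moreau envelope being antitone in mu.
   The second inequality is the first one solved for the squared step length.
   Only e^k enters, so the inequalities hold for any estimator G^k.
   Since prox is defined by THE, one first shows that the prox objective, being strongly
   convex and coercive, has a unique minimiser. *)

lemma nonneg_if_nonneg_affine_near_zero:
  fixes a b :: real
  assumes "\<And>t. 0 < t \<Longrightarrow> t \<le> 1 \<Longrightarrow> 0 \<le> a + t * b"
  shows "0 \<le> a"
proof (rule tendsto_lowerbound)
  show "((\<lambda>t. a + t * b) \<longlongrightarrow> a) (at_right 0)"
    by (auto intro!: tendsto_eq_intros)
  show "\<forall>\<^sub>F t in at_right 0. 0 \<le> a + t * b"
    using eventually_at_right_real[OF zero_less_one]
    by eventually_elim (auto intro: assms)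
qed simp

lemma power2_norm_add:
  fixes a b :: "'a::real_inner"
  shows "(norm (a + b))\<^sup>2 = (norm a)\<^sup>2 + 2 * inner a b + (norm b)\<^sup>2"
  by (simp add: power2_norm_eq_inner inner_add_left inner_add_right inner_commute)

lemma prox_objective_quadratic_growth:
  fixes g :: "'a::real_inner \<Rightarrow> real"
  assumes g: "convex_on UNIV g" and \<mu>: "0 < \<mu>"
    and min: "\<And>y. g u + (norm (u - v))\<^sup>2 / (2 * \<mu>) \<le> g y + (norm (y - v))\<^sup>2 / (2 * \<mu>)"
  shows "g u + (norm (u - v))\<^sup>2 / (2 * \<mu>) + (norm (y - u))\<^sup>2 / (2 * \<mu>)
    \<le> g y + (norm (y - v))\<^sup>2 / (2 * \<mu>)"
proof -
  have expand: "(norm (u - v + t *\<^sub>R (y - u)))\<^sup>2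
      = (norm (u - v))\<^sup>2 + 2 * t * inner (u - v) (y - u) + t\<^sup>2 * (norm (y - u))\<^sup>2" for t
    by (simp add: power2_norm_add power_mult_distrib)
  \<comment> \<open>0 \<le> a for all y says that (v - u) / \<mu> is a subgradient of g at u\<close>
  define a where "a = g y - g u + inner (u - v) (y - u) / \<mu>"
  have "0 \<le> a + t * ((norm (y - u))\<^sup>2 / (2 * \<mu>))" if t: "0 < t" "t \<le> 1" for t
  proof -
    have "g u + (norm (u - v))\<^sup>2 / (2 * \<mu>)
        \<le> g ((1 - t) *\<^sub>R u + t *\<^sub>R y) + (norm (u - v + t *\<^sub>R (y - u)))\<^sup>2 / (2 * \<mu>)"
      using min[of "(1 - t) *\<^sub>R u + t *\<^sub>R y"] by (simp add: algebra_simps)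
    also have "g ((1 - t) *\<^sub>R u + t *\<^sub>R y) \<le> (1 - t) * g u + t * g y"
      using convex_onD[OF g, of t u y] t by simp
    finally have "0 \<le> (1 - t) * g u + t * g y
        + (norm (u - v + t *\<^sub>R (y - u)))\<^sup>2 / (2 * \<mu>) - (g u + (norm (u - v))\<^sup>2 / (2 * \<mu>))"
      by simp
    also have "\<dots> = t * (a + t * ((norm (y - u))\<^sup>2 / (2 * \<mu>)))"
      unfolding expand a_def using \<mu> by (simp add: field_simps power2_eq_square)
    finally have "0 \<le> t * (a + t * ((norm (y - u))\<^sup>2 / (2 * \<mu>)))" .
    then show ?thesis
      using t by (simp add: zero_le_mult_iff)
  qed
  then have "0 \<le> a"
    by (rule nonneg_if_nonneg_affine_near_zero)
  moreover have "(norm (y - v))\<^sup>2 / (2 * \<mu>)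
      = (norm (u - v))\<^sup>2 / (2 * \<mu>) + inner (u - v) (y - u) / \<mu> + (norm (y - u))\<^sup>2 / (2 * \<mu>)"
    using expand[of 1] by (simp add: add_divide_distrib)
  ultimately show ?thesis
    unfolding a_def by linarith
qed

lemma convex_on_lower_bound:
  fixes g :: "'a::euclidean_space \<Rightarrow> real"
  assumes g: "convex_on UNIV g"
  obtains K where "0 \<le> K" "\<And>y. g v - K * (1 + norm (y - v)) \<le> g y"
proof -
  have "continuous_on (cball v 1) g"
    using convex_on_continuous[OF open_UNIV g] continuous_on_subset by blast
  then obtain m where m: "\<And>y. y \<in> cball v 1 \<Longrightarrow> g m \<le> g y"
    using continuous_attains_inf[OF compact_cball] by (metis centre_in_cball empty_iff zero_le_one)
  define K where "K = g v - g m"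
  have "0 \<le> K"
    unfolding K_def using m[of v] by simp
  moreover have "g v - K * (1 + norm (y - v)) \<le> g y" for y
  proof (cases "norm (y - v) \<le> 1")
    case True
    then have "g v - K \<le> g y"
      using m[of y] by (simp add: K_def dist_norm norm_minus_commute)
    then show ?thesis
      using mult_nonneg_nonneg[OF \<open>0 \<le> K\<close> norm_ge_zero[of "y - v"]] by (simp add: algebra_simps)
  next
    case False
    define r where "r = norm (y - v)"
    have r: "1 < r"
      using False r_def by simp
    define e where "e = (1 - 1 / r) *\<^sub>R v + (1 / r) *\<^sub>R y"
    have "e - v = (1 / r) *\<^sub>R (y - v)"
      unfolding e_def by (simp add: algebra_simps)
    then have "e \<in> cball v 1"
      using r by (simp add: r_def dist_norm norm_minus_commute)
    then have "g v - K \<le> g e"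
      using m by (simp add: K_def)
    also have "g e \<le> (1 - 1 / r) * g v + (1 / r) * g y"
      unfolding e_def using convex_onD[OF g, of "1 / r" v y] r by simp
    finally have "r * (g v - K) \<le> (r - 1) * g v + g y"
      using r by (simp add: field_simps)
    then show ?thesis
      using \<open>0 \<le> K\<close> r by (simp add: r_def algebra_simps)
  qed
  ultimately show ?thesis
    by (rule that)
qed

lemma prox_objective_has_minimizer:
  fixes g :: "'a::euclidean_space \<Rightarrow> real"
  assumes g: "convex_on UNIV g" and \<mu>: "0 < \<mu>"
  obtains u where "\<And>y. g u + (norm (u - v))\<^sup>2 / (2 * \<mu>) \<le> g y + (norm (y - v))\<^sup>2 / (2 * \<mu>)"
proof -
  obtain K where K: "0 \<le> K" and lower: "\<And>y. g v - K * (1 + norm (y - v)) \<le> g y"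
    using convex_on_lower_bound[OF g] by blast
  define F where "F y = g y + (norm (y - v))\<^sup>2 / (2 * \<mu>)" for y
  define R where "R = 4 * \<mu> * K + 1"
  have "continuous_on (cball v R) F"
    unfolding F_def using convex_on_continuous[OF open_UNIV g] \<mu>
    by (auto intro!: continuous_intros intro: continuous_on_subset)
  moreover have "v \<in> cball v R"
    using K \<mu> by (simp add: R_def)
  ultimately obtain u where u: "\<And>y. y \<in> cball v R \<Longrightarrow> F u \<le> F y"
    using continuous_attains_inf[OF compact_cball, of v R F] by blast
  \<comment> \<open>outside cball v R the quadratic term beats the linear lower bound, so F y > F v\<close>
  have "F u \<le> F y" for y
  proof (cases "y \<in> cball v R")
    case False
    define r where "r = norm (y - v)"
    have "0 \<le> 4 * \<mu> * K"
      using K \<mu> by simp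
    moreover have "R < r"
      using False by (simp add: r_def dist_norm norm_minus_commute)
    ultimately have r: "1 < r" "4 * \<mu> * K < r"
      unfolding R_def by linarith+
    have "K * (1 + r) * (2 * \<mu>) \<le> (4 * \<mu> * K) * r"
      using r K \<mu> by (simp add: algebra_simps mult_left_mono)
    also have "\<dots> < r\<^sup>2"
      using r by (simp add: power2_eq_square mult_strict_right_mono)
    finally have "K * (1 + r) < r\<^sup>2 / (2 * \<mu>)"
      using \<mu> by (simp add: pos_less_divide_eq)
    then have "F v < F y"
      using lower[of y] by (simp add: F_def r_def)
    then show ?thesis
      using u[of v] K \<mu> by (simp add: R_def)
  qed (rule u)
  then show ?thesis
    unfolding F_def by (rule that)
qed

lemma prox_three_point:
  fixes g :: "'a::euclidean_space \<Rightarrow> real"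
  assumes g: "convex_on UNIV g" and \<mu>: "0 < \<mu>"
  shows "g (prox \<mu> g v) + (norm (prox \<mu> g v - v))\<^sup>2 / (2 * \<mu>) + (norm (y - prox \<mu> g v))\<^sup>2 / (2 * \<mu>)
    \<le> g y + (norm (y - v))\<^sup>2 / (2 * \<mu>)"
proof -
  obtain u where u: "\<And>y. g u + (norm (u - v))\<^sup>2 / (2 * \<mu>) \<le> g y + (norm (y - v))\<^sup>2 / (2 * \<mu>)"
    using prox_objective_has_minimizer[OF g \<mu>] by blast
  have "prox \<mu> g v = u"
    unfolding prox_def
  proof (rule the_equality)
    fix w
    assume "\<forall>y. g w + (norm (w - v))\<^sup>2 / (2 * \<mu>) \<le> g y + (norm (y - v))\<^sup>2 / (2 * \<mu>)"
    then have "g w + (norm (w - v))\<^sup>2 / (2 * \<mu>) \<le> g u + (norm (u - v))\<^sup>2 / (2 * \<mu>)"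
      by blast
    then have "(norm (w - u))\<^sup>2 / (2 * \<mu>) \<le> 0"
      using prox_objective_quadratic_growth[OF g \<mu> u, of w] by linarith
    then show "w = u"
      using \<mu> by (simp add: divide_le_0_iff)
  qed (use u in blast)
  then show ?thesis
    using prox_objective_quadratic_growth[OF g \<mu> u] by simp
qed

lemma prox_minimizes:
  fixes g :: "'a::euclidean_space \<Rightarrow> real"
  assumes "convex_on UNIV g" and "0 < \<mu>"
  shows "g (prox \<mu> g v) + (norm (prox \<mu> g v - v))\<^sup>2 / (2 * \<mu>) \<le> g y + (norm (y - v))\<^sup>2 / (2 * \<mu>)"
proof -
  have "0 \<le> (norm (y - prox \<mu> g v))\<^sup>2 / (2 * \<mu>)"
    using assms(2) by simp
  then show ?thesis
    using prox_three_point[OF assms, of v y] by linarith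
qed

lemma moreau_eq_prox:
  fixes g :: "'a::euclidean_space \<Rightarrow> real"
  assumes "convex_on UNIV g" and "0 < \<mu>"
  shows "moreau \<mu> g v = g (prox \<mu> g v) + (norm (prox \<mu> g v - v))\<^sup>2 / (2 * \<mu>)"
  unfolding moreau_def by (rule cInf_eq_minimum) (auto intro: prox_minimizes[OF assms])

lemma moreau_antimono:
  fixes g :: "'a::euclidean_space \<Rightarrow> real"
  assumes g: "convex_on UNIV g" and "0 < \<mu>'" "\<mu>' \<le> \<mu>"
  shows "moreau \<mu> g v \<le> moreau \<mu>' g v"
proof -
  let ?p = "prox \<mu>' g v"
  have "0 < \<mu>"
    using assms by simp
  then have "moreau \<mu> g v \<le> g ?p + (norm (?p - v))\<^sup>2 / (2 * \<mu>)"
    unfolding moreau_eq_prox[OF g \<open>0 < \<mu>\<close>] by (rule prox_minimizes[OF g])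
  also have "\<dots> \<le> g ?p + (norm (?p - v))\<^sup>2 / (2 * \<mu>')"
    using assms by (simp add: frac_le)
  finally show ?thesis
    unfolding moreau_eq_prox[OF g \<open>0 < \<mu>'\<close>] .
qed

lemma descent_lemma:
  fixes Q :: "'a::real_inner \<Rightarrow> real" and D :: "'a \<Rightarrow> 'a"
  assumes deriv: "\<And>y. (Q has_derivative (\<lambda>v. inner (D y) v)) (at y)"
    and lipschitz: "\<And>y y'. norm (D y - D y') \<le> L * norm (y - y')"
  shows "Q y \<le> Q x + inner (D x) (y - x) + L / 2 * (norm (y - x))\<^sup>2"
proof -
  define d where "d = y - x"
  define q where "q t = Q (x + t *\<^sub>R d) - t * inner (D x) d - L / 2 * t\<^sup>2 * (norm d)\<^sup>2" for t
  have q_deriv: "(q has_real_derivative inner (D (x + t *\<^sub>R d) - D x) d - L * t * (norm d)\<^sup>2) (at t)"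
    for t
  proof -
    have "((\<lambda>t. Q (x + t *\<^sub>R d)) has_derivative (\<lambda>s. inner (D (x + t *\<^sub>R d)) (s *\<^sub>R d))) (at t)"
      by (rule has_derivative_compose[OF _ deriv]) (auto intro!: derivative_eq_intros)
    then have "((\<lambda>t. Q (x + t *\<^sub>R d)) has_real_derivative inner (D (x + t *\<^sub>R d)) d) (at t)"
      by (rule has_derivative_imp_has_field_derivative) simp
    then show ?thesis
      unfolding q_def by (auto intro!: derivative_eq_intros simp: inner_diff_left power2_eq_square)
  qed
  have "q 1 \<le> q 0"
  proof (rule DERIV_nonpos_imp_nonincreasing[of 0 1])
    fix t :: real
    assume t: "0 \<le> t" "t \<le> 1"
    have "inner (D (x + t *\<^sub>R d) - D x) d \<le> norm (D (x + t *\<^sub>R d) - D x) * norm d"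
      by (rule norm_cauchy_schwarz)
    also have "\<dots> \<le> L * norm (t *\<^sub>R d) * norm d"
      using lipschitz[of "x + t *\<^sub>R d" x] by (simp add: mult_right_mono)
    also have "\<dots> = L * t * (norm d)\<^sup>2"
      using t by (simp add: power2_eq_square)
    finally have "inner (D (x + t *\<^sub>R d) - D x) d \<le> L * t * (norm d)\<^sup>2" .
    then show "\<exists>y. (q has_real_derivative y) (at t) \<and> y \<le> 0"
      using q_deriv[of t] diff_le_0_iff_le by blast
  qed simp
  then show ?thesis
    unfolding q_def d_def by simp
qed

lemma lipschitz_constant_nonneg:
  fixes F :: "'a::{real_normed_vector, perfect_space} \<Rightarrow> 'b::real_normed_vector"
  assumes "\<And>y y'. norm (F y - F y') \<le> L * norm (y - y')"
  shows "0 \<le> L"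
proof -
  obtain e :: 'a where "norm e = 1"
    using vector_choose_size zero_le_one by blast
  then have "norm (F e - F 0) \<le> L"
    using assms[of e 0] by simp
  then show ?thesis
    using norm_ge_zero order_trans by blast
qed

lemma norm_adjoint_le:
  fixes A :: "'a::euclidean_space \<Rightarrow> 'b::euclidean_space"
  assumes "linear A"
  shows "norm (adjoint A w) \<le> onorm A * norm w"
proof -
  have A: "bounded_linear A"
    using assms by (simp add: linear_conv_bounded_linear)
  define p where "p = adjoint A w"
  have "(norm p)\<^sup>2 = inner (A p) w"
    by (simp add: p_def power2_norm_eq_inner adjoint_works[OF assms])
  also have "\<dots> \<le> norm (A p) * norm w"
    by (rule norm_cauchy_schwarz)
  also have "\<dots> \<le> onorm A * norm p * norm w"
    using onorm[OF A, of p] by (simp add: mult_right_mono)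
  finally have "norm p * norm p \<le> norm p * (onorm A * norm w)"
    by (simp add: power2_eq_square algebra_simps)
  then show ?thesis
    unfolding p_def[symmetric]
    by (cases "norm p = 0") (auto simp: onorm_pos_le[OF A])
qed

lemma adjoint_diff:
  fixes A B :: "'a::euclidean_space \<Rightarrow> 'b::euclidean_space"
  assumes "linear A" "linear B"
  shows "adjoint (\<lambda>v. A v - B v) = (\<lambda>w. adjoint A w - adjoint B w)"
  by (rule adjoint_unique) (simp add: inner_diff_left inner_diff_right adjoint_works[OF assms(1)]
      adjoint_works[OF assms(2)])

lemma Qpen_has_derivative:
  fixes f :: "'a::euclidean_space \<Rightarrow> real" and c :: "'a \<Rightarrow> 'b::euclidean_space"
  assumes f: "(f has_derivative (\<lambda>v. inner (fgrad y) v)) (at y)"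
    and c: "(c has_derivative Jc y) (at y)"
  shows "(Qpen f c \<rho> has_derivative (\<lambda>v. inner (Qgrad fgrad c Jc \<rho> y) v)) (at y)"
proof -
  have Jc: "linear (Jc y)"
    using c has_derivative_linear by blast
  have "Qpen f c \<rho> = (\<lambda>x. f x + \<rho> / 2 * inner (c x) (c x))"
    by (simp add: fun_eq_iff Qpen_def power2_norm_eq_inner)
  moreover have "((\<lambda>x. f x + \<rho> / 2 * inner (c x) (c x)) has_derivative
      (\<lambda>v. inner (fgrad y) v + \<rho> / 2 * (inner (c y) (Jc y v) + inner (Jc y v) (c y)))) (at y)"
    using f c by (auto intro!: derivative_eq_intros)
  moreover have "inner (fgrad y) v + \<rho> / 2 * (inner (c y) (Jc y v) + inner (Jc y v) (c y))
      = inner (Qgrad fgrad c Jc \<rho> y) v" for v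
    using adjoint_clauses(2)[OF Jc, of "c y" v]
    by (simp add: Qgrad_def inner_add_left inner_commute[of "c y"])
  ultimately show ?thesis
    by simp
qed

lemma Qgrad_lipschitz:
  fixes c :: "'a::euclidean_space \<Rightarrow> 'b::euclidean_space"
  assumes f_smooth: "\<And>y y'. norm (fgrad y - fgrad y') \<le> Lf * norm (y - y')"
    and c_deriv: "\<And>y. (c has_derivative Jc y) (at y)"
    and c_smooth: "\<And>y y'. onorm (\<lambda>v. Jc y v - Jc y' v) \<le> Lc * norm (y - y')"
    and Jc_bound: "\<And>y. onorm (Jc y) \<le> G"
    and c_bound: "\<And>y. norm (c y) \<le> C"
    and \<rho>: "0 < \<rho>0" "\<rho>0 \<le> \<rho>"
  shows "norm (Qgrad fgrad c Jc \<rho> y - Qgrad fgrad c Jc \<rho> y') \<le> Lrho Lf Lc G C \<rho>0 \<rho> * norm (y - y')"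
proof -
  define d where "d = norm (y - y')"
  have Jc: "bounded_linear (Jc x)" for x
    using c_deriv has_derivative_bounded_linear by blast
  have Jc_diff: "bounded_linear (\<lambda>v. Jc y v - Jc y' v)"
    using Jc bounded_linear_sub by blast
  have "0 \<le> Lf"
    using f_smooth by (rule lipschitz_constant_nonneg)
  have c_lipschitz: "norm (c y - c y') \<le> G * d"
    unfolding d_def using c_deriv Jc_bound
    by (intro differentiable_bound[of UNIV]) (auto intro: has_derivative_at_withinI)
  have "adjoint (Jc y) (c y) - adjoint (Jc y') (c y')
      = adjoint (\<lambda>v. Jc y v - Jc y' v) (c y) + adjoint (Jc y') (c y - c y')"
    using Jc by (simp add: adjoint_diff linear_diff adjoint_linear bounded_linear.linear)
  also have "norm \<dots> \<le> norm (adjoint (\<lambda>v. Jc y v - Jc y' v) (c y)) + norm (adjoint (Jc y') (c y - c y'))"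
    by (rule norm_triangle_ineq)
  also have "\<dots> \<le> onorm (\<lambda>v. Jc y v - Jc y' v) * norm (c y) + onorm (Jc y') * norm (c y - c y')"
    using Jc_diff Jc by (intro add_mono norm_adjoint_le bounded_linear.linear)
  also have "\<dots> \<le> Lc * d * C + G * (G * d)"
    using c_smooth c_bound Jc_bound c_lipschitz onorm_pos_le[OF Jc_diff] onorm_pos_le[OF Jc]
    by (intro add_mono mult_mono') (auto simp: d_def)
  finally have adjoint_lipschitz:
    "norm (adjoint (Jc y) (c y) - adjoint (Jc y') (c y')) \<le> (C * Lc + G\<^sup>2) * d"
    by (simp add: algebra_simps power2_eq_square)
  have "Qgrad fgrad c Jc \<rho> y - Qgrad fgrad c Jc \<rho> y'
      = (fgrad y - fgrad y') + \<rho> *\<^sub>R (adjoint (Jc y) (c y) - adjoint (Jc y') (c y'))"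
    by (simp add: Qgrad_def algebra_simps)
  also have "norm \<dots> \<le> Lf * d + \<rho> * ((C * Lc + G\<^sup>2) * d)"
    using f_smooth[of y y'] adjoint_lipschitz \<rho>
    by (intro norm_triangle_le add_mono) (auto simp: d_def mult_left_mono)
  also have "\<dots> \<le> \<rho> * (Lf / \<rho>0) * d + \<rho> * ((C * Lc + G\<^sup>2) * d)"
    using \<rho> \<open>0 \<le> Lf\<close> by (intro add_right_mono mult_right_mono) (auto simp: d_def field_simps mult_left_mono)
  finally show ?thesis
    by (simp add: Lrho_def d_def algebra_simps)
qed

lemma inner_le_young:
  fixes e w :: "'a::real_inner"
  assumes "0 < \<mu>"
  shows "inner e w \<le> \<mu> * (norm e)\<^sup>2 + (norm w)\<^sup>2 / (4 * \<mu>)"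
proof -
  have "0 \<le> (norm ((2 * \<mu>) *\<^sub>R e - w))\<^sup>2 / (4 * \<mu>)"
    using assms by simp
  also have "(norm ((2 * \<mu>) *\<^sub>R e - w))\<^sup>2 = 4 * \<mu>\<^sup>2 * (norm e)\<^sup>2 - 4 * \<mu> * inner e w + (norm w)\<^sup>2"
    using power2_norm_add[of "(2 * \<mu>) *\<^sub>R e" "- w"] by (simp add: power_mult_distrib)
  finally show ?thesis
    using assms by (simp add: field_simps power2_eq_square)
qed

lemma norm_relaxed_step_inequality:
  fixes x z z' u u' :: "'a::real_inner"
  assumes "0 \<le> \<beta>" "\<beta> \<le> 1" and z': "z' = z - \<beta> *\<^sub>R (u - x)"
  shows "(norm (x - z'))\<^sup>2 + (norm (u' - z))\<^sup>2 + (norm (z' - z))\<^sup>2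
    \<le> (norm (x - z))\<^sup>2 + (norm (u' - z'))\<^sup>2 + (norm (u' - u))\<^sup>2"
proof -
  define w where "w = u - x"
  define p where "p = u' - u"
  define q where "q = x - z"
  \<comment> \<open>left minus right side is - |p + \<beta> w|^2 + 2 \<beta> (\<beta> - 1) |w|^2\<close>
  have "0 \<le> inner (p + \<beta> *\<^sub>R w) (p + \<beta> *\<^sub>R w)"
    by simp
  moreover have "\<beta> * (\<beta> - 1) * inner w w \<le> 0"
    using assms by (simp add: mult_nonneg_nonpos mult_nonpos_nonneg)
  moreover have eqs: "x - z' = q + \<beta> *\<^sub>R w" "u' - z = p + w + q" "z' - z = - (\<beta> *\<^sub>R w)"
    "u' - z' = p + w + q + \<beta> *\<^sub>R w" "x - z = q" "u' - u = p"
    unfolding z' w_def p_def q_def by (simp_all add: algebra_simps)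
  ultimately show ?thesis
    unfolding eqs power2_norm_eq_inner
    by (simp add: inner_add_left inner_add_right inner_commute algebra_simps power2_eq_square)
qed

lemma prox_gradient_step_decrease:
  fixes Q h :: "'a::euclidean_space \<Rightarrow> real"
  assumes h: "convex_on UNIV h" and \<mu>: "0 < \<mu>"
    and descent: "Q x' \<le> Q x + inner D (x' - x) + L / 2 * (norm (x' - x))\<^sup>2"
    and x': "x' = prox \<mu> h (z - \<mu> *\<^sub>R G)"
  shows "Q x' + h x' + (norm (x' - z))\<^sup>2 / (2 * \<mu>)
    \<le> Q x + h x + (norm (x - z))\<^sup>2 / (2 * \<mu>) - (1 / (2 * \<mu>) - L) / 2 * (norm (x' - x))\<^sup>2
      + \<mu> * (norm (G - D))\<^sup>2"
proof -
  have shift: "(norm (a - (z - \<mu> *\<^sub>R G)))\<^sup>2 / (2 * \<mu>)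
      = (norm (a - z))\<^sup>2 / (2 * \<mu>) + inner (a - z) G + \<mu> / 2 * (norm G)\<^sup>2" for a
  proof -
    have eq: "a - (z - \<mu> *\<^sub>R G) = (a - z) + \<mu> *\<^sub>R G"
      by simp
    have "(norm (a - (z - \<mu> *\<^sub>R G)))\<^sup>2
        = (norm (a - z))\<^sup>2 + 2 * \<mu> * inner (a - z) G + \<mu>\<^sup>2 * (norm G)\<^sup>2"
      unfolding eq power2_norm_add by (simp add: power_mult_distrib)
    then show ?thesis
      using \<mu> by (simp add: field_simps power2_eq_square)
  qed
  have "h x' + (norm (x' - (z - \<mu> *\<^sub>R G)))\<^sup>2 / (2 * \<mu>) + (norm (x - x'))\<^sup>2 / (2 * \<mu>)
      \<le> h x + (norm (x - (z - \<mu> *\<^sub>R G)))\<^sup>2 / (2 * \<mu>)"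
    using prox_three_point[OF h \<mu>] x' by simp
  then have prox: "h x' + (norm (x' - z))\<^sup>2 / (2 * \<mu>) + inner (x' - z) G + (norm (x' - x))\<^sup>2 / (2 * \<mu>)
      \<le> h x + (norm (x - z))\<^sup>2 / (2 * \<mu>) + inner (x - z) G"
    unfolding shift by (simp add: norm_minus_commute)
  have young: "inner (D - G) (x' - x) \<le> \<mu> * (norm (G - D))\<^sup>2 + (norm (x' - x))\<^sup>2 / (4 * \<mu>)"
    using inner_le_young[OF \<mu>] by (metis norm_minus_commute)
  have "inner (x' - z) G - inner (x - z) G = inner G (x' - x)"
    "inner D (x' - x) = inner G (x' - x) + inner (D - G) (x' - x)"
    by (simp_all add: inner_diff_left inner_diff_right inner_commute)
  moreover have "(norm (x' - x))\<^sup>2 / (4 * \<mu>) - (norm (x' - x))\<^sup>2 / (2 * \<mu>) + L / 2 * (norm (x' - x))\<^sup>2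
      + (1 / (2 * \<mu>) - L) / 2 * (norm (x' - x))\<^sup>2 = 0"
    using \<mu> by (simp add: field_simps)
  ultimately show ?thesis
    using descent prox young by linarith
qed

lemma moreau_relaxed_step_decrease:
  fixes g :: "'a::euclidean_space \<Rightarrow> real"
  assumes g: "convex_on UNIV g" and \<mu>: "0 < \<mu>" and \<beta>: "0 \<le> \<beta>" "\<beta> \<le> 1"
    and z': "z' = z - \<beta> *\<^sub>R (prox \<mu> g z - x)"
  shows "(norm (x - z'))\<^sup>2 / (2 * \<mu>) - moreau \<mu> g z'
    \<le> (norm (x - z))\<^sup>2 / (2 * \<mu>) - moreau \<mu> g z - (norm (z' - z))\<^sup>2 / (2 * \<mu>)"
proof -
  let ?u = "prox \<mu> g z" and ?u' = "prox \<mu> g z'"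
  have "g ?u + (norm (?u - z))\<^sup>2 / (2 * \<mu>) + (norm (?u' - ?u))\<^sup>2 / (2 * \<mu>)
      \<le> g ?u' + (norm (?u' - z))\<^sup>2 / (2 * \<mu>)"
    by (rule prox_three_point[OF g \<mu>])
  moreover have "((norm (x - z'))\<^sup>2 + (norm (?u' - z))\<^sup>2 + (norm (z' - z))\<^sup>2) / (2 * \<mu>)
      \<le> ((norm (x - z))\<^sup>2 + (norm (?u' - z'))\<^sup>2 + (norm (?u' - ?u))\<^sup>2) / (2 * \<mu>)"
    using norm_relaxed_step_inequality[OF \<beta> z'] \<mu> by (simp add: divide_right_mono)
  ultimately show ?thesis
    unfolding moreau_eq_prox[OF g \<mu>] add_divide_distrib by linarith
qed

lemma potential_step_decrease:
  fixes f h g :: "'a::euclidean_space \<Rightarrow> real" and c :: "'a \<Rightarrow> 'b::real_normed_vector"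
  assumes h: "convex_on UNIV h" and g: "convex_on UNIV g"
    and \<mu>: "0 < \<mu>" and L: "0 \<le> L" and \<beta>: "0 \<le> \<beta>" "\<beta> \<le> 1"
    and descent: "Qpen f c \<rho> x' \<le> Qpen f c \<rho> x + inner D (x' - x) + L / 2 * (norm (x' - x))\<^sup>2"
    and x': "x' = prox \<mu> h (z - \<mu> *\<^sub>R G)"
    and z': "z' = z - \<beta> *\<^sub>R (prox \<mu> g z - x')"
  shows "potential f c h g \<rho> \<mu> x' z'
    \<le> potential f c h g \<rho> \<mu> x z - (1 / (2 * \<mu>) - L) / 2 * ((norm (x' - x))\<^sup>2 + (norm (z' - z))\<^sup>2)
      + \<mu> * (norm (G - D))\<^sup>2"
proof -
  have "(1 / (2 * \<mu>) - L) / 2 \<le> 1 / (2 * \<mu>)"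
    using \<mu> L by (simp add: field_simps)
  then have "(1 / (2 * \<mu>) - L) / 2 * (norm (z' - z))\<^sup>2 \<le> 1 / (2 * \<mu>) * (norm (z' - z))\<^sup>2"
    by (rule mult_right_mono) simp
  then have "(1 / (2 * \<mu>) - L) / 2 * (norm (z' - z))\<^sup>2 \<le> (norm (z' - z))\<^sup>2 / (2 * \<mu>)"
    by simp
  then show ?thesis
    using prox_gradient_step_decrease[OF h \<mu> descent x'] moreau_relaxed_step_decrease[OF g \<mu> \<beta> z']
    unfolding potential_def distrib_left by linarith
qed

lemma potential_parameter_change:
  fixes g :: "'a::euclidean_space \<Rightarrow> real" and c :: "'a \<Rightarrow> 'b::real_normed_vector"
  assumes g: "convex_on UNIV g" and \<mu>: "0 < \<mu>'" "\<mu>' \<le> \<mu>" and \<rho>: "\<rho> \<le> \<rho>'"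
    and c: "norm (c x) \<le> C"
  shows "potential f c h g \<rho>' \<mu>' x z
    \<le> potential f c h g \<rho> \<mu> x z + (\<rho>' - \<rho>) / 2 * C\<^sup>2
      + \<bar>\<mu> - \<mu>'\<bar> / (2 * \<mu>'\<^sup>2) * (C\<^sup>2 + (norm (x - z))\<^sup>2)"
proof -
  have "(\<rho>' - \<rho>) / 2 * (norm (c x))\<^sup>2 \<le> (\<rho>' - \<rho>) / 2 * C\<^sup>2"
    using \<rho> c by (intro mult_left_mono power_mono) auto
  moreover have "Qpen f c \<rho>' x = Qpen f c \<rho> x + (\<rho>' - \<rho>) / 2 * (norm (c x))\<^sup>2"
    by (simp add: Qpen_def diff_divide_distrib left_diff_distrib)
  ultimately have Qpen: "Qpen f c \<rho>' x \<le> Qpen f c \<rho> x + (\<rho>' - \<rho>) / 2 * C\<^sup>2"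
    by linarith
  have "1 / (2 * \<mu>') - 1 / (2 * \<mu>) = (\<mu> - \<mu>') / (2 * \<mu> * \<mu>')"
    using \<mu> by (simp add: field_simps)
  also have "\<dots> \<le> \<bar>\<mu> - \<mu>'\<bar> / (2 * \<mu>'\<^sup>2)"
    using \<mu> by (simp add: frac_le mult_right_mono power2_eq_square)
  finally have "1 / (2 * \<mu>') * (norm (x - z))\<^sup>2
      \<le> (1 / (2 * \<mu>) + \<bar>\<mu> - \<mu>'\<bar> / (2 * \<mu>'\<^sup>2)) * (norm (x - z))\<^sup>2"
    by (intro mult_right_mono) auto
  then have "(norm (x - z))\<^sup>2 / (2 * \<mu>')
      \<le> (norm (x - z))\<^sup>2 / (2 * \<mu>) + \<bar>\<mu> - \<mu>'\<bar> / (2 * \<mu>'\<^sup>2) * (norm (x - z))\<^sup>2"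
    by (simp add: distrib_right)
  moreover have "0 \<le> \<bar>\<mu> - \<mu>'\<bar> / (2 * \<mu>'\<^sup>2) * C\<^sup>2"
    by simp
  ultimately show ?thesis
    using Qpen moreau_antimono[OF g \<mu>, of z] unfolding potential_def distrib_left by linarith
qed

lemma le_inverse_step_coefficient_mult:
  fixes \<mu> L S B :: real
  assumes \<mu>: "0 < \<mu>" and step: "\<mu> * L \<le> 1 / 4" and le: "(1 / (2 * \<mu>) - L) / 2 * S \<le> B"
  shows "S \<le> 4 * \<mu> / (1 - 2 * \<mu> * L) * B"
proof -
  have "0 < 1 - 2 * \<mu> * L"
    using step by linarith
  then have "4 * \<mu> / (1 - 2 * \<mu> * L) = 1 / ((1 / (2 * \<mu>) - L) / 2)"
    and "0 < (1 / (2 * \<mu>) - L) / 2"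
    using \<mu> by (simp_all add: field_simps)
  then show ?thesis
    using le by (simp add: pos_le_divide_eq mult.commute)
qed

theorem lemmaC2:
  fixes f :: "'a::euclidean_space \<Rightarrow> real" and fgrad :: "'a \<Rightarrow> 'a"
    and c :: "'a \<Rightarrow> 'b::euclidean_space" and Jc :: "'a \<Rightarrow> 'a \<Rightarrow> 'b"
    and h g :: "'a \<Rightarrow> real"
    and sg :: "'a \<Rightarrow> 'xi \<Rightarrow> 'a" and \<xi> :: "nat \<Rightarrow> 'xi"
    and Lf Lc C G \<beta> :: real
    and \<mu> \<rho> \<alpha> :: "nat \<Rightarrow> real"
    and x z s d Gk :: "nat \<Rightarrow> 'a"
    and k :: nat
  assumes f_grad: "\<forall>y. (f has_derivative (\<lambda>v. inner (fgrad y) v)) (at y)"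
    and f_smooth: "\<forall>y y'. norm (fgrad y - fgrad y') \<le> Lf * norm (y - y')"
    and c_deriv: "\<forall>y. (c has_derivative Jc y) (at y)"
    and c_smooth: "\<forall>y y'. onorm (\<lambda>v. Jc y v - Jc y' v) \<le> Lc * norm (y - y')"
    and C_pos: "C > 0" and G_pos: "G > 0"
    and f_grad_bd: "\<forall>y. norm (fgrad y) \<le> G"
    and h_convex: "convex_on UNIV h" and g_convex: "convex_on UNIV g"
    and h_subgrad_bd: "\<forall>y. \<forall>u\<in>subdiff h y. norm u \<le> G"
    and g_subgrad_bd: "\<forall>y. \<forall>u\<in>subdiff g y. norm u \<le> G"
    and c_grad_bd: "\<forall>y. onorm (Jc y) \<le> G"
    and c_bd: "\<forall>y. norm (c y) \<le> C"
    and mu_pos: "\<forall>j. \<mu> j > 0" and rho0_pos: "\<rho> 0 > 0"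
    and step: "\<forall>j. \<mu> j * Lrho Lf Lc G C (\<rho> 0) (\<rho> j) \<le> 1 / 4"
    and mu_mono: "\<forall>j. \<mu> (Suc j) \<le> \<mu> j"
    and rho_mono: "\<forall>j. \<rho> j \<le> \<rho> (Suc j)"
    and beta: "0 < \<beta>" "\<beta> \<le> 1"
    and x_upd: "\<forall>j. x (Suc j) = prox (\<mu> j) h (z j - \<mu> j *\<^sub>R Gk j)"
    and z_upd: "\<forall>j. z (Suc j) = z j - \<beta> *\<^sub>R (prox (\<mu> j) g (z j) - x (Suc j))"
    and estimator:
      "((\<forall>j. Gk j = s j + \<rho> j *\<^sub>R adjoint (Jc (x j)) (c (x j))) \<and>
        (\<forall>j. s (Suc j) = (1 - \<alpha> j) *\<^sub>R s j + \<alpha> j *\<^sub>R sg (x (Suc j)) (\<xi> (Suc j))))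
       \<or>
       ((\<forall>j. Gk j = d j + \<rho> j *\<^sub>R adjoint (Jc (x j)) (c (x j))) \<and>
        (\<forall>j. d (Suc j) = sg (x (Suc j)) (\<xi> (Suc j)) + (1 - \<alpha> j) *\<^sub>R (d j - sg (x j) (\<xi> (Suc j)))))"
  shows
    "potential f c h g (\<rho> (Suc k)) (\<mu> (Suc k)) (x (Suc k)) (z (Suc k))
       \<le> potential f c h g (\<rho> k) (\<mu> k) (x k) (z k)
         - (1 / (2 * \<mu> k) - Lrho Lf Lc G C (\<rho> 0) (\<rho> k)) / 2
             * ((norm (x (Suc k) - x k))\<^sup>2 + (norm (z (Suc k) - z k))\<^sup>2)
         + (\<rho> (Suc k) - \<rho> k) / 2 * C\<^sup>2
         + \<bar>\<mu> k - \<mu> (Suc k)\<bar> / (2 * (\<mu> (Suc k))\<^sup>2) * (C\<^sup>2 + (norm (x (Suc k) - z (Suc k)))\<^sup>2)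
         + \<mu> k * (norm (Gk k - Qgrad fgrad c Jc (\<rho> k) (x k)))\<^sup>2
     \<and> (norm (x (Suc k) - x k))\<^sup>2 + (norm (z (Suc k) - z k))\<^sup>2
       \<le> 4 * \<mu> k / (1 - 2 * \<mu> k * Lrho Lf Lc G C (\<rho> 0) (\<rho> k))
         * (potential f c h g (\<rho> k) (\<mu> k) (x k) (z k)
            - potential f c h g (\<rho> (Suc k)) (\<mu> (Suc k)) (x (Suc k)) (z (Suc k))
            + \<bar>\<mu> k - \<mu> (Suc k)\<bar> / (2 * (\<mu> (Suc k))\<^sup>2) * (C\<^sup>2 + (norm (x (Suc k) - z (Suc k)))\<^sup>2)
            + (\<rho> (Suc k) - \<rho> k) / 2 * C\<^sup>2
            + \<mu> k * (norm (Gk k - Qgrad fgrad c Jc (\<rho> k) (x k)))\<^sup>2)"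
proof -
  let ?L = "Lrho Lf Lc G C (\<rho> 0) (\<rho> k)"
  have \<mu>: "0 < \<mu> k" "0 < \<mu> (Suc k)" "\<mu> (Suc k) \<le> \<mu> k"
    using mu_pos mu_mono by auto
  have "\<rho> 0 \<le> \<rho> k"
    using rho_mono incseq_SucI[of \<rho>] by (simp add: incseqD)
  then have Q_lipschitz: "norm (Qgrad fgrad c Jc (\<rho> k) y - Qgrad fgrad c Jc (\<rho> k) y') \<le> ?L * norm (y - y')"
    for y y'
    using Qgrad_lipschitz f_smooth c_deriv c_smooth c_grad_bd c_bd rho0_pos by blast
  have descent: "Qpen f c (\<rho> k) (x (Suc k)) \<le> Qpen f c (\<rho> k) (x k)
      + inner (Qgrad fgrad c Jc (\<rho> k) (x k)) (x (Suc k) - x k) + ?L / 2 * (norm (x (Suc k) - x k))\<^sup>2"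
    using Qpen_has_derivative f_grad c_deriv Q_lipschitz by (blast intro: descent_lemma)
  have "0 \<le> ?L"
    using Q_lipschitz by (rule lipschitz_constant_nonneg)
  then have first: "potential f c h g (\<rho> (Suc k)) (\<mu> (Suc k)) (x (Suc k)) (z (Suc k))
       \<le> potential f c h g (\<rho> k) (\<mu> k) (x k) (z k) - (1 / (2 * \<mu> k) - ?L) / 2
           * ((norm (x (Suc k) - x k))\<^sup>2 + (norm (z (Suc k) - z k))\<^sup>2)
         + (\<rho> (Suc k) - \<rho> k) / 2 * C\<^sup>2
         + \<bar>\<mu> k - \<mu> (Suc k)\<bar> / (2 * (\<mu> (Suc k))\<^sup>2) * (C\<^sup>2 + (norm (x (Suc k) - z (Suc k)))\<^sup>2)
         + \<mu> k * (norm (Gk k - Qgrad fgrad c Jc (\<rho> k) (x k)))\<^sup>2"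
    using potential_step_decrease[OF h_convex g_convex \<mu>(1) \<open>0 \<le> ?L\<close> less_imp_le[OF beta(1)] beta(2) descent
        x_upd[rule_format] z_upd[rule_format]]
      potential_parameter_change[where c = c and x = "x (Suc k)" and z = "z (Suc k)" and f = f and h = h,
        OF g_convex \<mu>(2,3) rho_mono[rule_format, of k] c_bd[rule_format]]
    by linarith
  then show ?thesis
    by (intro conjI le_inverse_step_coefficient_mult[OF \<mu>(1) step[rule_format]]; use first in linarith)
qed

end
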